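(* Let $L\in\mathbb N$, $L\ge2$, ${\bf A}\in\mathbb R^{M\times N}$, ${\bf b}\in\mathbb R^M$, and let $(r,{\bf u})$ follow the weight-normalized gradient flow with learning rates $\eta_r(t)=r(t)^2$, $\eta_{\bf u}=1$, with $r(0)>0$, ${\bf u}(0)>0$, $\|{\bf u}(0)\|_2=1$. Put ${\bf x}=\frac{r}{\|{\bf u}\|_2}{\bf u}$ and $\tilde{\bf x}={\bf x}^{\odot L}$. Define $F:\mathbb R_+^N\to\mathbb R$ by $F(\tilde{\bf x})=\frac12\langle\tilde{\bf x}\odot\log(\tilde{\bf x})-\tilde{\bf x},\mathbf 1\rangle$ if $L=2$ (with $0\log0=0$) and $F(\tilde{\bf x})=\frac{L}{2(2-L)}\langle\tilde{\bf x}^{\odot\frac2L},\mathbf 1\rangle$ if $L>2$, and its Bregman divergence $D_F({\bf p},{\bf q})=F({\bf p})-F({\bf q})-\langle\nabla F({\bf q}),{\bf p}-{\bf q}\rangle$. Then for every ${\bf z}\ge0$ with ${\bf A}{\bf z}={\bf b}$, $$\partial_t D_F({\bf z},\tilde{\bf x}(t))=-2L\,\|{\bf x}(t)\|_2^2\,\mathcal L({\bf x}(t)).$$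
   Context: $\odot$ denotes entrywise product/power, $\log$ acts entrywise, vector inequalities are entrywise, $\mathbf 1$ is the all-ones vector, $\mathbb R_+=[0,\infty)$. Loss: $\mathcal L({\bf x})=\frac{1}{2L}\|{\bf A}{\bf x}^{\odot L}-{\bf b}\|_2^2$. Weight-normalized loss $\tilde{\mathcal L}(r,{\bf u})=\mathcal L\big(\frac{r}{\|{\bf u}\|_2}{\bf u}\big)$. Weight-normalized gradient flow: $\partial_t r=-\eta_r\nabla_r\tilde{\mathcal L}(r,{\bf u})$, $\partial_t{\bf u}=-\eta_{\bf u}\nabla_{\bf u}\tilde{\mathcal L}(r,{\bf u})$, $r(0)=r_0$, ${\bf u}(0)={\bf u}_0$. *)

theory Defs
  imports "HOL-Analysis.Analysis"
begin

definition epow :: "real^'n \<Rightarrow> nat \<Rightarrow> real^'n" where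
  "epow x L = (\<chi> i. (x $ i) ^ L)"

definition lossL :: "nat \<Rightarrow> real^'n^'m \<Rightarrow> real^'m \<Rightarrow> real^'n \<Rightarrow> real" where
  "lossL L A b x = (1 / (2 * real L)) * (norm (A *v epow x L - b))\<^sup>2"

definition lossWN :: "nat \<Rightarrow> real^'n^'m \<Rightarrow> real^'m \<Rightarrow> real \<Rightarrow> real^'n \<Rightarrow> real" where
  "lossWN L A b r u = lossL L A b ((r / norm u) *\<^sub>R u)"

definition Fpot :: "nat \<Rightarrow> real^'n \<Rightarrow> real" where
  "Fpot L p = (if L = 2
     then (1/2) * (\<Sum>i\<in>UNIV. (if p $ i = 0 then 0 else p $ i * ln (p $ i)) - p $ i)
     else (real L / (2 * (2 - real L))) * (\<Sum>i\<in>UNIV. (p $ i) powr (2 / real L)))"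

definition bregman :: "nat \<Rightarrow> real^'n \<Rightarrow> real^'n \<Rightarrow> real" where
  "bregman L p q = Fpot L p - Fpot L q - inner (THE g. GDERIV (Fpot L) q :> g) (p - q)"

end

theory Submission
  imports Defs
begin

text \<open>Rescaling \<open>u\<close> does not change the weight-normalized loss, so the gradient in \<open>u\<close> is
  orthogonal to \<open>u\<close> and \<open>norm u = 1\<close> along the flow. Hence \<open>x = r u\<close>, and the choice
  \<open>\<eta>\<^sub>r = r\<^sup>2\<close> makes \<open>x\<close> solve \<open>x' = - \<parallel>x\<parallel>\<^sup>2 g(x)\<close> with the gradient
  \<open>g(x)\<^sub>i = x\<^sub>i ^ (L - 1) (A\<^sup>T (A x^L - b))\<^sub>i\<close> of the loss. For \<open>L \<ge> 2\<close> every coordinate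
  then solves a linear equation \<open>x\<^sub>i' = k(t) x\<^sub>i\<close>, so \<open>x\<close> stays positive. On the positive
  orthant \<open>D\<^sub>F(z, x^L) = F(z) + \<Sum>\<^sub>i (x\<^sub>i\<^sup>2 / 2 - z\<^sub>i \<phi>(x\<^sub>i))\<close> with
  \<open>\<phi>'(y) = 1 / y ^ (L - 1)\<close>, so along the flow its derivative is
  \<open>- \<parallel>x\<parallel>\<^sup>2 \<langle>x^L - z, A\<^sup>T (A x^L - b)\<rangle> = - \<parallel>x\<parallel>\<^sup>2 \<parallel>A x^L - b\<parallel>\<^sup>2\<close> because \<open>A z = b\<close>.\<close>

lemma has_derivative_vec_lambda:
  fixes f :: "'a::real_normed_vector \<Rightarrow> real^'n"
  assumes "\<And>i. ((\<lambda>x. f x $ i) has_derivative (\<lambda>h. f' h $ i)) (at a within S)"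
  shows "(f has_derivative f') (at a within S)"
proof (rule has_derivative_componentwise_within[THEN iffD2], intro ballI)
  fix v :: "real^'n" assume "v \<in> Basis"
  then obtain j where v: "v = axis j 1" by (auto simp: Basis_vec_def)
  have "(\<lambda>x. f x \<bullet> v) = (\<lambda>x. f x $ j)" "(\<lambda>x. f' x \<bullet> v) = (\<lambda>x. f' x $ j)"
    unfolding v by (simp_all add: inner_axis)
  then show "((\<lambda>x. f x \<bullet> v) has_derivative (\<lambda>x. f' x \<bullet> v)) (at a within S)"
    using assms[of j] by simp
qed

lemma has_derivative_vec_nth_compose:
  fixes q :: "real^'n"
  assumes "(\<phi> has_real_derivative d) (at (q $ i))"
  shows "((\<lambda>p. \<phi> (p $ i)) has_derivative (\<lambda>h. d * h $ i)) (at q)"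
  using has_derivative_compose[OF bounded_linear.has_derivative[OF bounded_linear_vec_nth has_derivative_ident]
      assms[unfolded has_field_derivative_def]]
  by simp

lemma has_vector_derivative_vec_nth:
  assumes "(X has_vector_derivative v) F"
  shows "((\<lambda>s. X s $ i) has_real_derivative v $ i) F"
  using bounded_linear.has_derivative[OF bounded_linear_vec_nth[of i] assms[unfolded has_vector_derivative_def]]
  by (simp add: has_field_derivative_def mult_commute_abs)

lemma gderiv_unique:
  fixes f :: "'a::real_inner \<Rightarrow> real"
  assumes "GDERIV f x :> g" "GDERIV f x :> g'"
  shows "g = g'"
proof -
  have "(\<lambda>h. inner h g) = (\<lambda>h. inner h g')"
    using has_derivative_unique assms by (metis gderiv_def)
  then have "inner (g - g') g = inner (g - g') g'" by metis
  then have "inner (g - g') (g - g') = 0" by (simp add: inner_diff_right)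
  then show ?thesis by simp
qed

lemma the_gderiv_eq:
  fixes f :: "'a::real_inner \<Rightarrow> real"
  assumes "GDERIV f x :> g"
  shows "(THE g. GDERIV f x :> g) = g"
  using assms gderiv_unique by blast

lemma gderiv_inner_eq_0_of_scale_invariant:
  fixes f :: "'a::real_inner \<Rightarrow> real"
  assumes g: "GDERIV f v :> g" and inv: "\<And>c. c > 0 \<Longrightarrow> f (c *\<^sub>R v) = f v"
  shows "inner v g = 0"
proof -
  have "((\<lambda>c. c *\<^sub>R v) has_derivative (\<lambda>k. k *\<^sub>R v)) (at 1)"
    by (rule bounded_linear.has_derivative[OF bounded_linear_scaleR_left has_derivative_ident])
  moreover have "(f has_derivative (\<lambda>h. inner h g)) (at ((\<lambda>c. c *\<^sub>R v) 1))"
    using g by (simp add: gderiv_def)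
  ultimately have d1: "((\<lambda>c. f (c *\<^sub>R v)) has_derivative (\<lambda>k. inner (k *\<^sub>R v) g)) (at 1)"
    by (rule has_derivative_compose)
  have d2: "((\<lambda>c. f (c *\<^sub>R v)) has_derivative (\<lambda>k. 0)) (at 1)"
    by (rule has_derivative_transform_within_open[where s="{0<..}", OF has_derivative_const])
      (auto simp: inv)
  have "(\<lambda>k. inner (k *\<^sub>R v) g) = (\<lambda>k::real. 0)"
    using has_derivative_unique[OF d1 d2] .
  then show ?thesis by (metis scaleR_one)
qed

lemma pos_of_has_derivative_linear:
  fixes f k :: "real \<Rightarrow> real"
  assumes f': "\<And>t. t \<ge> 0 \<Longrightarrow> (f has_real_derivative f t * k t) (at t within {0..})"
    and k: "continuous_on {0..} k" and f0: "f 0 > 0" and T: "T \<ge> 0"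
  shows "f T > 0"
proof -
  define K where "K x = integral {0..x} k" for x
  define h where "h x = f x * exp (- K x)" for x
  have kT: "continuous_on {0..T} k" using k by (rule continuous_on_subset) auto
  have "\<exists>c. \<forall>x\<in>{0..T}. h x = c"
  proof (rule has_field_derivative_zero_constant)
    fix x assume x: "x \<in> {0..T}"
    have "(K has_real_derivative k x) (at x within {0..T})"
      unfolding K_def by (rule integral_has_real_derivative[OF kT x])
    moreover have "(f has_real_derivative f x * k x) (at x within {0..T})"
      using f'[of x] x by (auto intro: DERIV_subset)
    ultimately show "(h has_real_derivative 0) (at x within {0..T})"
      unfolding h_def by (auto intro!: derivative_eq_intros simp: algebra_simps)
  qed simp
  then have "h T = h 0" using T by auto
  with f0 have "f T * exp (- K T) > 0" by (simp add: h_def K_def)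
  then show ?thesis by (simp add: zero_less_mult_iff)
qed

lemma epow_nth [simp]: "epow x L $ i = x $ i ^ L"
  by (simp add: epow_def)

lemma has_derivative_epow:
  "((\<lambda>x. epow x L) has_derivative (\<lambda>h. \<chi> i. real L * x $ i ^ (L - 1) * h $ i)) (at x within S)"
proof (rule has_derivative_vec_lambda)
  fix i
  show "((\<lambda>x. epow x L $ i) has_derivative (\<lambda>h. (\<chi> i. real L * x $ i ^ (L - 1) * h $ i) $ i)) (at x within S)"
    using has_derivative_power[OF bounded_linear.has_derivative[OF bounded_linear_vec_nth has_derivative_ident],
        of i L x S]
    by (simp add: ac_simps)
qed

definition adjoint_residual :: "nat \<Rightarrow> real^'n^'m \<Rightarrow> real^'m \<Rightarrow> real^'n \<Rightarrow> real^'n" where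
  "adjoint_residual L A b x = transpose A *v (A *v epow x L - b)"

definition loss_grad :: "nat \<Rightarrow> real^'n^'m \<Rightarrow> real^'m \<Rightarrow> real^'n \<Rightarrow> real^'n" where
  "loss_grad L A b x = (\<chi> i. x $ i ^ (L - 1) * adjoint_residual L A b x $ i)"

lemma inner_adjoint_residual:
  "inner (adjoint_residual L A b x) k = inner (A *v epow x L - b) (A *v k)"
proof -
  have "transpose A *v (A *v epow x L - b) = (A *v epow x L - b) v* A"
    by (metis transpose_transpose vector_transpose_matrix)
  then show ?thesis
    by (simp only: adjoint_residual_def dot_lmul_matrix)
qed

lemma continuous_on_adjoint_residual: "continuous_on UNIV (adjoint_residual L A b)"
proof -
  have "continuous_on UNIV (\<lambda>x. epow x L)"
    by (rule has_derivative_continuous_on) (rule has_derivative_epow)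
  then show ?thesis
    unfolding adjoint_residual_def[abs_def]
    by (intro continuous_on_compose2[OF linear_continuous_on[OF matrix_vector_mul_bounded_linear]]
        continuous_on_diff continuous_on_const) auto
qed

lemma lossL_gderiv:
  assumes "L > 0"
  shows "GDERIV (lossL L A b) x :> loss_grad L A b x"
proof -
  let ?y = "\<lambda>x. A *v epow x L - b"
  let ?dE = "\<lambda>h. \<chi> i. real L * x $ i ^ (L - 1) * h $ i"
  have "(?y has_derivative (\<lambda>h. A *v ?dE h)) (at x)"
    using has_derivative_diff[OF bounded_linear.has_derivative[OF matrix_vector_mul_bounded_linear
          has_derivative_epow] has_derivative_const[where c=b]]
    by simp
  from has_derivative_inner[OF this this]
  have deriv: "((\<lambda>x. (1 / (2 * real L)) * inner (?y x) (?y x)) has_derivative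
      (\<lambda>h. (1 / (2 * real L)) * (inner (?y x) (A *v ?dE h) + inner (A *v ?dE h) (?y x)))) (at x)"
    by (intro has_derivative_mult_right)
  have loss_eq: "lossL L A b = (\<lambda>x. (1 / (2 * real L)) * inner (?y x) (?y x))"
    by (simp add: fun_eq_iff lossL_def power2_norm_eq_inner)
  have grad_eq: "(\<lambda>h. (1 / (2 * real L)) * (inner (?y x) (A *v ?dE h) + inner (A *v ?dE h) (?y x)))
      = (\<lambda>h. inner h (loss_grad L A b x))"
  proof
    fix h
    have "(1 / (2 * real L)) * (inner (?y x) (A *v ?dE h) + inner (A *v ?dE h) (?y x))
        = (1 / real L) * inner (adjoint_residual L A b x) (?dE h)"
      unfolding inner_commute[of "A *v ?dE h" "?y x"] inner_adjoint_residual
      using assms by simp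
    also have "\<dots> = inner h (loss_grad L A b x)"
      unfolding inner_vec_def sum_distrib_left
      by (intro sum.cong refl) (use assms in \<open>simp add: loss_grad_def\<close>)
    finally show "(1 / (2 * real L)) * (inner (?y x) (A *v ?dE h) + inner (A *v ?dE h) (?y x))
        = inner h (loss_grad L A b x)" .
  qed
  show ?thesis
    unfolding gderiv_def loss_eq grad_eq[symmetric] by (rule deriv)
qed

lemma lossWN_scale_invariant:
  assumes "c > 0"
  shows "lossWN L A b r (c *\<^sub>R u) = lossWN L A b r u"
proof -
  have "r / norm (c *\<^sub>R u) * c = r / norm u"
    using assms by (cases "u = 0") auto
  then show ?thesis
    by (simp add: lossWN_def scaleR_scaleR del: norm_scaleR)
qed

lemma lossWN_gderiv_radius:
  assumes v: "norm v = 1" and L: "L > 0"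
  shows "GDERIV (\<lambda>s. lossWN L A b s v) s :> inner v (loss_grad L A b (s *\<^sub>R v))"
proof -
  let ?g = "loss_grad L A b (s *\<^sub>R v)"
  have "((\<lambda>s. s *\<^sub>R v) has_derivative (\<lambda>k. k *\<^sub>R v)) (at s)"
    by (rule bounded_linear.has_derivative[OF bounded_linear_scaleR_left has_derivative_ident])
  from has_derivative_compose[OF this lossL_gderiv[OF L, unfolded gderiv_def]]
  have deriv: "((\<lambda>s. lossL L A b (s *\<^sub>R v)) has_derivative (\<lambda>k. inner (k *\<^sub>R v) ?g)) (at s)" .
  have loss_eq: "(\<lambda>s. lossWN L A b s v) = (\<lambda>s. lossL L A b (s *\<^sub>R v))"
    using v by (simp add: lossWN_def)
  have grad_eq: "(\<lambda>k. inner (k *\<^sub>R v) ?g) = (\<lambda>k. inner k (inner v ?g))"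
    by (simp add: fun_eq_iff)
  show ?thesis
    unfolding gderiv_def loss_eq grad_eq[symmetric] by (rule deriv)
qed

lemma lossWN_gderiv_direction:
  assumes v: "norm v = 1" and L: "L > 0"
  shows "GDERIV (\<lambda>w. lossWN L A b s w) v :>
     s *\<^sub>R (loss_grad L A b (s *\<^sub>R v) - inner v (loss_grad L A b (s *\<^sub>R v)) *\<^sub>R v)"
proof -
  let ?g = "loss_grad L A b (s *\<^sub>R v)"
  have v0: "v \<noteq> 0" using v by auto
  have "(norm has_derivative (\<lambda>h. inner h v)) (at v)"
    using GDERIV_norm[OF v0] v by (simp add: gderiv_def sgn_div_norm)
  moreover have "((\<lambda>y. s / y) has_real_derivative - s) (at (norm v))"
    using v by (auto intro!: derivative_eq_intros)
  ultimately have "((\<lambda>w. s / norm w) has_derivative (\<lambda>h. - s * inner h v)) (at v)"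
    unfolding has_field_derivative_def by (rule has_derivative_compose)
  from has_derivative_scaleR[OF this has_derivative_ident]
  have "((\<lambda>w. (s / norm w) *\<^sub>R w) has_derivative (\<lambda>h. s *\<^sub>R h + (- s * inner h v) *\<^sub>R v)) (at v)"
    using v by simp
  from has_derivative_compose[OF this lossL_gderiv[OF L, unfolded gderiv_def]]
  have deriv: "((\<lambda>w. lossL L A b ((s / norm w) *\<^sub>R w)) has_derivative
      (\<lambda>h. inner (s *\<^sub>R h + (- s * inner h v) *\<^sub>R v) ?g)) (at v)"
    using v by simp
  have grad_eq: "(\<lambda>h. inner (s *\<^sub>R h + (- s * inner h v) *\<^sub>R v) ?g)
      = (\<lambda>h. inner h (s *\<^sub>R (?g - inner v ?g *\<^sub>R v)))"
    by (auto simp: inner_add_left inner_diff_right inner_commute algebra_simps)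
  show ?thesis
    unfolding gderiv_def lossWN_def grad_eq[symmetric] by (rule deriv)
qed

lemma wn_flow_norm_eq:
  assumes u_flow: "\<forall>t\<ge>0. \<exists>g. GDERIV (\<lambda>v. lossWN L A b (r t) v) (u t) :> g \<and>
                   (u has_vector_derivative (- g)) (at t within {0..})"
    and s: "s \<ge> 0"
  shows "norm (u s) = norm (u 0)"
proof -
  have deriv_0: "((\<lambda>s. inner (u s) (u s)) has_real_derivative 0) (at s within {0..})"
    if "s \<in> {0..}" for s
  proof -
    from u_flow that obtain g where g: "GDERIV (\<lambda>v. lossWN L A b (r s) v) (u s) :> g"
      and u': "(u has_derivative (\<lambda>h. h *\<^sub>R - g)) (at s within {0..})"
      by (auto simp: has_vector_derivative_def)
    have "inner (u s) g = 0"
      by (rule gderiv_inner_eq_0_of_scale_invariant[OF g]) (rule lossWN_scale_invariant)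
    then have "(\<lambda>h. inner (u s) (h *\<^sub>R - g) + inner (h *\<^sub>R - g) (u s)) = (*) 0"
      by (auto simp: inner_commute)
    with has_derivative_inner[OF u' u'] show ?thesis
      by (simp add: has_field_derivative_def)
  qed
  have "\<exists>c. \<forall>s\<in>{0::real..}. inner (u s) (u s) = c"
    by (rule has_field_derivative_zero_constant) (auto intro: deriv_0)
  then obtain c where c: "\<forall>s\<in>{0::real..}. inner (u s) (u s) = c"
    by blast
  have "(norm (u s))\<^sup>2 = (norm (u 0))\<^sup>2"
    unfolding power2_norm_eq_inner using c s by simp
  then show ?thesis
    by (simp add: power2_eq_iff_nonneg)
qed

lemma wn_flow_has_vector_derivative:
  assumes L: "L > 0"
    and r_flow: "\<forall>t\<ge>0. \<exists>g. GDERIV (\<lambda>s. lossWN L A b s (u t)) (r t) :> g \<and>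
                   (r has_real_derivative (- ((r t)\<^sup>2 * g))) (at t within {0..})"
    and u_flow: "\<forall>t\<ge>0. \<exists>g. GDERIV (\<lambda>v. lossWN L A b (r t) v) (u t) :> g \<and>
                   (u has_vector_derivative (- g)) (at t within {0..})"
    and u_unit: "\<And>t. t \<ge> 0 \<Longrightarrow> norm (u t) = 1" and s: "s \<ge> 0"
  shows "((\<lambda>s. (r s / norm (u s)) *\<^sub>R u s) has_vector_derivative
    - ((r s)\<^sup>2 *\<^sub>R loss_grad L A b (r s *\<^sub>R u s))) (at s within {0..})"
proof -
  let ?g = "loss_grad L A b (r s *\<^sub>R u s)"
  from r_flow u_flow s obtain g1 g2
    where g1: "GDERIV (\<lambda>\<sigma>. lossWN L A b \<sigma> (u s)) (r s) :> g1"
      and r': "(r has_real_derivative - ((r s)\<^sup>2 * g1)) (at s within {0..})"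
      and g2: "GDERIV (\<lambda>v. lossWN L A b (r s) v) (u s) :> g2"
      and u': "(u has_vector_derivative - g2) (at s within {0..})"
    by blast
  have g1_eq: "g1 = inner (u s) ?g"
    by (rule gderiv_unique[OF g1 lossWN_gderiv_radius[OF u_unit[OF s] L]])
  have g2_eq: "g2 = r s *\<^sub>R (?g - inner (u s) ?g *\<^sub>R u s)"
    by (rule gderiv_unique[OF g2 lossWN_gderiv_direction[OF u_unit[OF s] L]])
  have "r s *\<^sub>R (- g2) + (- ((r s)\<^sup>2 * g1)) *\<^sub>R u s = - ((r s)\<^sup>2 *\<^sub>R ?g)"
    unfolding g1_eq g2_eq by (simp add: algebra_simps power2_eq_square)
  with has_vector_derivative_scaleR[OF r' u']
  have "((\<lambda>s. r s *\<^sub>R u s) has_vector_derivative - ((r s)\<^sup>2 *\<^sub>R ?g)) (at s within {0..})"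
    by simp
  then show ?thesis
    by (rule has_vector_derivative_transform[rotated 2]) (use s u_unit in auto)
qed

lemma loss_grad_flow_pos:
  fixes X :: "real \<Rightarrow> real^'n"
  assumes L: "L \<ge> 2"
    and X': "\<And>s. s \<ge> 0 \<Longrightarrow>
      (X has_vector_derivative - (c s *\<^sub>R loss_grad L A b (X s))) (at s within {0..})"
    and c: "continuous_on {0..} c" and X0: "X 0 $ i > 0" and s: "s \<ge> 0"
  shows "X s $ i > 0"
proof -
  define k where "k \<tau> = - c \<tau> * (X \<tau> $ i) ^ (L - 2) * adjoint_residual L A b (X \<tau>) $ i" for \<tau>
  have "continuous_on {0..} X"
    using X' by (auto simp: continuous_on_eq_continuous_within intro: has_vector_derivative_continuous)
  then have k_cont: "continuous_on {0..} k"
    unfolding k_def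
    by (intro continuous_intros c continuous_on_compose2[OF continuous_on_adjoint_residual]
        continuous_on_compose2[OF linear_continuous_on[OF bounded_linear_vec_nth]]) auto
  have "x ^ (L - 1) = x * x ^ (L - 2)" for x :: real
    using L by (metis Suc_diff_Suc Suc_1 less_le_trans lessI power_Suc)
  then have "((\<lambda>s. X s $ i) has_real_derivative X \<tau> $ i * k \<tau>) (at \<tau> within {0..})"
    if "\<tau> \<ge> 0" for \<tau>
    using has_vector_derivative_vec_nth[OF X'[OF that], of i]
    by (simp add: k_def loss_grad_def ac_simps)
  from pos_of_has_derivative_linear[OF this k_cont X0 s] show ?thesis .
qed

definition mirror_pot :: "nat \<Rightarrow> real \<Rightarrow> real" where
  "mirror_pot L y = (if L = 2 then ((if y = 0 then 0 else y * ln y) - y) / 2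
     else real L / (2 * (2 - real L)) * y powr (2 / real L))"

definition mirror_pot_deriv :: "nat \<Rightarrow> real \<Rightarrow> real" where
  "mirror_pot_deriv L y = (if L = 2 then ln y / 2 else y powr (2 / real L - 1) / (2 - real L))"

lemma Fpot_eq_sum_mirror_pot: "Fpot L p = (\<Sum>i\<in>UNIV. mirror_pot L (p $ i))"
  by (simp add: Fpot_def mirror_pot_def sum_distrib_left sum_divide_distrib)

lemma mirror_pot_has_real_derivative:
  assumes y: "y > 0" and L: "L > 0"
  shows "(mirror_pot L has_real_derivative mirror_pot_deriv L y) (at y)"
proof (cases "L = 2")
  case True
  have "((\<lambda>y. (y * ln y - y) / 2) has_real_derivative mirror_pot_deriv L y) (at y)"
    using y True by (auto intro!: derivative_eq_intros simp: mirror_pot_deriv_def)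
  then show ?thesis
    by (rule has_field_derivative_transform_within_open[where S="{0<..}"])
      (use y True in \<open>auto simp: mirror_pot_def\<close>)
next
  case False
  then have c: "2 - real L \<noteq> 0"
    by simp
  have "((\<lambda>y. real L / (2 * (2 - real L)) * y powr (2 / real L)) has_real_derivative
      real L / (2 * (2 - real L)) * (2 / real L * y powr (2 / real L - 1))) (at y)"
    using y c by (auto intro!: derivative_eq_intros)
  moreover have "real L / (2 * (2 - real L)) * (2 / real L * y powr (2 / real L - 1))
      = y powr (2 / real L - 1) / (2 - real L)"
    using L c by (simp add: field_simps)
  ultimately show ?thesis
    using False by (simp add: mirror_pot_def[abs_def] mirror_pot_deriv_def)
qed

lemma Fpot_gderiv:
  assumes q: "\<forall>i. q $ i > 0" and L: "L > 0"
  shows "GDERIV (Fpot L) q :> (\<chi> i. mirror_pot_deriv L (q $ i))"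
proof -
  have "((\<lambda>p. \<Sum>i\<in>UNIV. mirror_pot L (p $ i)) has_derivative
      (\<lambda>h. \<Sum>i\<in>UNIV. mirror_pot_deriv L (q $ i) * h $ i)) (at q)"
    using q by (intro has_derivative_sum has_derivative_vec_nth_compose mirror_pot_has_real_derivative L) auto
  then show ?thesis
    by (simp add: gderiv_def Fpot_eq_sum_mirror_pot[abs_def] inner_vec_def mult.commute)
qed

definition recip_pow_primitive :: "nat \<Rightarrow> real \<Rightarrow> real" where
  "recip_pow_primitive L y = (if L = 2 then ln y else y powr (2 - real L) / (2 - real L))"

lemma recip_pow_primitive_has_real_derivative:
  assumes y: "y > 0" and L: "L \<ge> 2"
  shows "(recip_pow_primitive L has_real_derivative 1 / y ^ (L - 1)) (at y)"
proof (cases "L = 2")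
  case True
  then show ?thesis
    using y by (auto intro!: derivative_eq_intros simp: recip_pow_primitive_def[abs_def])
next
  case False
  have "((\<lambda>y. y powr (2 - real L) / (2 - real L)) has_real_derivative
      (2 - real L) * y powr (2 - real L - 1) / (2 - real L)) (at y)"
    using y by (auto intro!: derivative_eq_intros)
  moreover have "2 - real L - 1 = - real (L - 1)"
    using L by (simp add: of_nat_diff)
  then have "y powr (2 - real L - 1) = 1 / y ^ (L - 1)"
    using y by (simp only: powr_minus_divide powr_realpow)
  ultimately show ?thesis
    using False L by (simp add: recip_pow_primitive_def[abs_def])
qed

lemma mirror_pot_tangent_eq:
  assumes y: "y > 0" and L: "L \<ge> 2"
  shows "- mirror_pot L (y ^ L) - mirror_pot_deriv L (y ^ L) * (z - y ^ L)
    = y\<^sup>2 / 2 - z * recip_pow_primitive L y"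
proof (cases "L = 2")
  case True
  have "ln (y\<^sup>2) = 2 * ln y"
    using y by (simp add: ln_realpow)
  with y True show ?thesis
    by (simp add: mirror_pot_def mirror_pot_deriv_def recip_pow_primitive_def field_simps)
next
  case False
  define p where "p = y powr (2 - real L)"
  define d where "d = 2 - real L"
  have d: "d \<noteq> 0"
    using False by (simp add: d_def)
  have yL: "y ^ L = y powr real L"
    using y by (simp add: powr_realpow)
  have "(y ^ L) powr (2 / real L) = y powr 2"
    unfolding yL powr_powr using L by simp
  then have pot: "mirror_pot L (y ^ L) = (2 - d) / (2 * d) * y\<^sup>2"
    using False y by (simp add: mirror_pot_def d_def)
  have "(y ^ L) powr (2 / real L - 1) = p"
    unfolding yL powr_powr p_def using L by (simp add: algebra_simps)
  then have dpot: "mirror_pot_deriv L (y ^ L) = p / d"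
    using False by (simp add: mirror_pot_deriv_def d_def)
  have py: "p * y ^ L = y\<^sup>2"
    unfolding yL p_def powr_add[symmetric] using y by simp
  have "- mirror_pot L (y ^ L) - mirror_pot_deriv L (y ^ L) * (z - y ^ L) = y\<^sup>2 / 2 - z * (p / d)"
    unfolding pot dpot right_diff_distrib times_divide_eq_left py using d by (simp add: field_simps)
  then show ?thesis
    using False by (simp add: recip_pow_primitive_def p_def d_def)
qed

lemma bregman_epow_eq:
  assumes x: "\<forall>i. x $ i > 0" and L: "L \<ge> 2"
  shows "bregman L z (epow x L) = Fpot L z + (\<Sum>i\<in>UNIV. (x $ i)\<^sup>2 / 2 - z $ i * recip_pow_primitive L (x $ i))"
proof -
  have "(THE g. GDERIV (Fpot L) (epow x L) :> g) = (\<chi> i. mirror_pot_deriv L (x $ i ^ L))"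
    using x L Fpot_gderiv[of "epow x L" L] by (intro the_gderiv_eq) simp
  then have "bregman L z (epow x L) = Fpot L z
      + (\<Sum>i\<in>UNIV. - mirror_pot L (x $ i ^ L) - mirror_pot_deriv L (x $ i ^ L) * (z $ i - x $ i ^ L))"
    by (simp add: bregman_def Fpot_eq_sum_mirror_pot[of L "epow x L"] inner_vec_def sum_subtractf
        sum_negf)
  also have "\<dots> = Fpot L z + (\<Sum>i\<in>UNIV. (x $ i)\<^sup>2 / 2 - z $ i * recip_pow_primitive L (x $ i))"
    using x L by (simp add: mirror_pot_tangent_eq)
  finally show ?thesis .
qed

lemma bregman_epow_has_real_derivative:
  fixes X :: "real \<Rightarrow> real^'n"
  assumes L: "L \<ge> 2" and z: "A *v z = b"
    and S: "open S" "t \<in> S" and pos: "\<And>s i. s \<in> S \<Longrightarrow> X s $ i > 0"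
    and X': "(X has_vector_derivative - (c *\<^sub>R loss_grad L A b (X t))) (at t)"
  shows "((\<lambda>s. bregman L z (epow (X s) L)) has_real_derivative
    - 2 * real L * c * lossL L A b (X t)) (at t)"
proof -
  let ?x = "X t" and ?w = "adjoint_residual L A b (X t)"
  define D where "D i = - c * ?x $ i ^ (L - 1) * ?w $ i" for i
  have "((\<lambda>s. (X s $ i)\<^sup>2 / 2 - z $ i * recip_pow_primitive L (X s $ i)) has_real_derivative
      ?x $ i * D i - z $ i * (1 / ?x $ i ^ (L - 1) * D i)) (at t)" for i
  proof -
    have Xi': "((\<lambda>s. X s $ i) has_real_derivative D i) (at t)"
      using has_vector_derivative_vec_nth[OF X', of i] by (simp add: D_def loss_grad_def mult.assoc)
    have "((\<lambda>s. recip_pow_primitive L (X s $ i)) has_real_derivative 1 / ?x $ i ^ (L - 1) * D i) (at t)"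
      by (rule DERIV_chain2[OF recip_pow_primitive_has_real_derivative[OF pos[OF S(2)] L] Xi'])
    with Xi' show ?thesis
      by (auto intro!: derivative_eq_intros)
  qed
  then have "((\<lambda>s. \<Sum>i\<in>UNIV. (X s $ i)\<^sup>2 / 2 - z $ i * recip_pow_primitive L (X s $ i))
      has_real_derivative (\<Sum>i\<in>UNIV. ?x $ i * D i - z $ i * (1 / ?x $ i ^ (L - 1) * D i))) (at t)"
    by (rule DERIV_sum)
  from DERIV_add[OF DERIV_const this]
  have deriv: "((\<lambda>s. Fpot L z + (\<Sum>i\<in>UNIV. (X s $ i)\<^sup>2 / 2 - z $ i * recip_pow_primitive L (X s $ i)))
      has_real_derivative (\<Sum>i\<in>UNIV. ?x $ i * D i - z $ i * (1 / ?x $ i ^ (L - 1) * D i))) (at t)"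
    by simp
  have rate_eq: "(\<Sum>i\<in>UNIV. ?x $ i * D i - z $ i * (1 / ?x $ i ^ (L - 1) * D i))
      = - 2 * real L * c * lossL L A b ?x"
  proof -
    have "?x $ i * D i - z $ i * (1 / ?x $ i ^ (L - 1) * D i) = - c * ((epow ?x L - z) $ i * ?w $ i)" for i
    proof -
      have "?x $ i ^ (L - 1) \<noteq> 0"
        using pos[OF S(2), of i] by simp
      then have "1 / ?x $ i ^ (L - 1) * D i = - c * ?w $ i"
        by (auto simp: D_def)
      moreover have "?x $ i * D i = - c * ?x $ i ^ L * ?w $ i"
        using L by (cases L) (auto simp: D_def algebra_simps)
      ultimately show ?thesis
        by (simp add: algebra_simps)
    qed
    then have "(\<Sum>i\<in>UNIV. ?x $ i * D i - z $ i * (1 / ?x $ i ^ (L - 1) * D i))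
        = - c * inner (epow ?x L - z) ?w"
      by (simp add: inner_vec_def sum_distrib_left)
    also have "inner (epow ?x L - z) ?w = (norm (A *v epow ?x L - b))\<^sup>2"
      by (simp add: inner_commute[of _ ?w] inner_adjoint_residual matrix_vector_mult_diff_distrib z
          power2_norm_eq_inner)
    finally show ?thesis
      using L by (simp add: lossL_def)
  qed
  show ?thesis
    using deriv[unfolded rate_eq]
    by (rule has_field_derivative_transform_within_open[OF _ S])
      (simp add: bregman_epow_eq pos L)
qed

theorem mainTheorem17:
  fixes L :: nat and A :: "real^'n^'m" and b :: "real^'m"
    and r :: "real \<Rightarrow> real" and u :: "real \<Rightarrow> real^'n"
  assumes hL: "L \<ge> 2"
    and r_flow: "\<forall>t\<ge>0. \<exists>g. GDERIV (\<lambda>s. lossWN L A b s (u t)) (r t) :> g \<and>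
                   (r has_real_derivative (- ((r t)\<^sup>2 * g))) (at t within {0..})"
    and u_flow: "\<forall>t\<ge>0. \<exists>g. GDERIV (\<lambda>v. lossWN L A b (r t) v) (u t) :> g \<and>
                   (u has_vector_derivative (- g)) (at t within {0..})"
    and r0: "r 0 > 0"
    and u0: "\<forall>i. u 0 $ i > 0"
    and u0n: "norm (u 0) = 1"
    and z_nonneg: "\<forall>i. z $ i \<ge> 0"
    and z_sol: "A *v z = b"
  shows "\<forall>t>0. ((\<lambda>s. bregman L z (epow ((r s / norm (u s)) *\<^sub>R u s) L))
            has_real_derivative
              (- 2 * real L * (norm ((r t / norm (u t)) *\<^sub>R u t))\<^sup>2
                 * lossL L A b ((r t / norm (u t)) *\<^sub>R u t))) (at t)"
proof (intro allI impI)
  fix t :: real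
  assume t: "t > 0"
  define X where "X s = (r s / norm (u s)) *\<^sub>R u s" for s
  have u_unit: "norm (u s) = 1" if "s \<ge> 0" for s
    using wn_flow_norm_eq[OF u_flow that] u0n by simp
  then have X_eq: "X s = r s *\<^sub>R u s" if "s \<ge> 0" for s
    using that by (simp add: X_def)
  have X': "(X has_vector_derivative - ((r s)\<^sup>2 *\<^sub>R loss_grad L A b (X s))) (at s within {0..})"
    if "s \<ge> 0" for s
    using wn_flow_has_vector_derivative[OF _ r_flow u_flow u_unit that] hL u_unit[OF that]
    by (simp add: X_def[abs_def])
  have "continuous_on {0..} r"
    using r_flow by (auto simp: continuous_on_eq_continuous_within intro: DERIV_continuous)
  then have r2_cont: "continuous_on {0..} (\<lambda>s. (r s)\<^sup>2)"
    by (intro continuous_intros)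
  have "X 0 $ i > 0" for i
    using r0 u0 u0n by (simp add: X_def)
  with X' have X_pos: "X s $ i > 0" if "s \<ge> 0" for s i
    using loss_grad_flow_pos[OF hL, where c="\<lambda>s. (r s)\<^sup>2", OF _ r2_cont _ that] by blast
  from X'[of t] t have "(X has_vector_derivative - ((r t)\<^sup>2 *\<^sub>R loss_grad L A b (X t))) (at t)"
    using at_within_interior[of t "{0..}"] by simp
  from bregman_epow_has_real_derivative[OF hL z_sol open_greaterThan _ _ this] t X_pos
  show "((\<lambda>s. bregman L z (epow (X s) L)) has_real_derivative
      - 2 * real L * (norm (X t))\<^sup>2 * lossL L A b (X t)) (at t)"
    using u_unit[of t] by (simp add: X_eq)
qed

end
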